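(* Let $n\ge2$ and let $Z$ be the $n\times n$ Zielke matrix defined by $Z[i,j]=1$ if $1\le i\le n-1$ and $j>i$, $Z[n,1]=-1$, and all other entries $0$. Fix a blocking of $Z$ into $n_t$ diagonal blocks, each of size at least $2$, and let $0<\tau\le\tfrac12$. Apply the BEAM factorization with threshold $\tau$ to $Z$. Then the max-norm growth factor equals $$\max_{1\le k\le n_t}\frac{\|\widetilde A^{(k)}\|_{\max}}{\|Z\|_{\max}}=\tau^{1-n_t}.$$
   Context: BEAM factorization with threshold $\tau$ (block LU with additive modifications): set $\widetilde A^{(1)}=Z$. For $k=1,\dots,n_t$: compute an SVD $\widetilde A^{(k)}_{k,k}=U_k\Sigma_kV_k^T$; replace every singular value $\le\tau$ in $\Sigma_k$ by $\tau$, obtaining $\widetilde\Sigma_k$, and set $D_k=U_k\widetilde\Sigma_kV_k^T$ (the modified diagonal block, with factors $L_{kk}=U_k$, $R_{kk}=\widetilde\Sigma_kV_k^T$); then form $\widetilde A^{(k+1)}=\widetilde A^{(k)}_{k+1:n_t,k+1:n_t}-\widetilde A^{(k)}_{k+1:n_t,k}D_k^{-1}\widetilde A^{(k)}_{k,k+1:n_t}$. Blocks are defined by a strictly increasing list $[1=\mathcal{I}_1<\dots<\mathcal{I}_{n_t+1}=n+1]$ and the blocks of $\widetilde A^{(k)}$ are indexed $k,\dots,n_t$. $\|X\|_{\max}=\max_{i,j}|X[i,j]|$. *)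

theory Defs
  imports Complex_Main
begin

text \<open>Matrices are represented as functions nat \<Rightarrow> nat \<Rightarrow> real, indexed 1-based
  by the global row/column indices of Z; only entries in the relevant index set matter.\<close>

definition zielke :: "nat \<Rightarrow> nat \<Rightarrow> nat \<Rightarrow> real" where
  "zielke n i j =
     (if 1 \<le> i \<and> i \<le> n - 1 \<and> i < j \<and> j \<le> n then 1
      else if i = n \<and> j = 1 then -1 else 0)"

definition maxnorm_on :: "nat set \<Rightarrow> (nat \<Rightarrow> nat \<Rightarrow> real) \<Rightarrow> real" where
  "maxnorm_on S M = Max {\<bar>M i j\<bar> | i j. i \<in> S \<and> j \<in> S}"

definition mmul_on :: "nat set \<Rightarrow> (nat \<Rightarrow> nat \<Rightarrow> real) \<Rightarrow> (nat \<Rightarrow> nat \<Rightarrow> real) \<Rightarrow> nat \<Rightarrow> nat \<Rightarrow> real" where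
  "mmul_on S A B i j = (\<Sum>l\<in>S. A i l * B l j)"

definition is_inverse_on :: "nat set \<Rightarrow> (nat \<Rightarrow> nat \<Rightarrow> real) \<Rightarrow> (nat \<Rightarrow> nat \<Rightarrow> real) \<Rightarrow> bool" where
  "is_inverse_on S M N \<longleftrightarrow>
     (\<forall>i\<in>S. \<forall>j\<in>S. mmul_on S M N i j = (if i = j then 1 else 0)
                  \<and> mmul_on S N M i j = (if i = j then 1 else 0))"

definition inv_on :: "nat set \<Rightarrow> (nat \<Rightarrow> nat \<Rightarrow> real) \<Rightarrow> nat \<Rightarrow> nat \<Rightarrow> real" where
  "inv_on S M = (SOME N. is_inverse_on S M N)"

definition orthogonal_on :: "nat set \<Rightarrow> (nat \<Rightarrow> nat \<Rightarrow> real) \<Rightarrow> bool" where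
  "orthogonal_on S Q \<longleftrightarrow>
     (\<forall>i\<in>S. \<forall>j\<in>S. (\<Sum>l\<in>S. Q l i * Q l j) = (if i = j then 1 else 0))"

definition svd_on :: "nat set \<Rightarrow> (nat \<Rightarrow> nat \<Rightarrow> real) \<Rightarrow> (nat \<Rightarrow> nat \<Rightarrow> real)
     \<Rightarrow> (nat \<Rightarrow> nat \<Rightarrow> real) \<Rightarrow> (nat \<Rightarrow> nat \<Rightarrow> real) \<Rightarrow> bool" where
  "svd_on S M U Sg V \<longleftrightarrow>
     orthogonal_on S U \<and> orthogonal_on S V \<and>
     (\<forall>i\<in>S. \<forall>j\<in>S. i \<noteq> j \<longrightarrow> Sg i j = 0) \<and>
     (\<forall>i\<in>S. Sg i i \<ge> 0) \<and>
     (\<forall>i\<in>S. \<forall>j\<in>S. M i j = (\<Sum>p\<in>S. \<Sum>q\<in>S. U i p * Sg p q * V j q))"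

definition sigma_mod :: "real \<Rightarrow> (nat \<Rightarrow> nat \<Rightarrow> real) \<Rightarrow> nat \<Rightarrow> nat \<Rightarrow> real" where
  "sigma_mod tau Sg p q = (if p = q then (if Sg p p \<le> tau then tau else Sg p p) else Sg p q)"

definition beam_D :: "nat set \<Rightarrow> real \<Rightarrow> (nat \<Rightarrow> nat \<Rightarrow> real) \<Rightarrow> (nat \<Rightarrow> nat \<Rightarrow> real)
     \<Rightarrow> (nat \<Rightarrow> nat \<Rightarrow> real) \<Rightarrow> nat \<Rightarrow> nat \<Rightarrow> real" where
  "beam_D S tau U Sg V i j = (\<Sum>p\<in>S. \<Sum>q\<in>S. U i p * sigma_mod tau Sg p q * V j q)"

text \<open>Block list I = [I_1, ..., I_(nt+1)] (I_k = I ! (k-1)), nt = length I - 1.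
  Block k has index set {I_k ..< I_(k+1)}; A k is the matrix tilde A^(k), indexed
  globally on {I_k .. n}; (U k, Sg k, V k) is the SVD chosen at step k.
  beam_run states that (A, U, Sg, V) is a valid run of BEAM on Z (any choice of SVDs).\<close>
definition blk :: "nat list \<Rightarrow> nat \<Rightarrow> nat set" where
  "blk I k = {I ! (k - 1) ..< I ! k}"

definition beam_run :: "nat \<Rightarrow> nat list \<Rightarrow> real \<Rightarrow> (nat \<Rightarrow> nat \<Rightarrow> nat \<Rightarrow> real)
     \<Rightarrow> (nat \<Rightarrow> nat \<Rightarrow> nat \<Rightarrow> real) \<Rightarrow> (nat \<Rightarrow> nat \<Rightarrow> nat \<Rightarrow> real)
     \<Rightarrow> (nat \<Rightarrow> nat \<Rightarrow> nat \<Rightarrow> real) \<Rightarrow> bool" where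
  "beam_run n I tau A U Sg V \<longleftrightarrow>
     (\<forall>i\<in>{1..n}. \<forall>j\<in>{1..n}. A 1 i j = zielke n i j) \<and>
     (\<forall>k\<in>{1..length I - 1}. svd_on (blk I k) (A k) (U k) (Sg k) (V k)) \<and>
     (\<forall>k\<in>{1..<length I - 1}. \<forall>i\<in>{I ! k..n}. \<forall>j\<in>{I ! k..n}.
        A (Suc k) i j = A k i j -
          (\<Sum>p\<in>blk I k. \<Sum>q\<in>blk I k.
             A k i p * inv_on (blk I k) (beam_D (blk I k) tau (U k) (Sg k) (V k)) p q * A k q j))"

end

theory Submission
  imports Defs "Jordan_Normal_Form.Determinant"
begin

text \<open>Every block of \<open>Z\<close> that BEAM meets as a pivot is the strictly upper triangular all-ones
  matrix \<open>T\<close>. Its singular vectors satisfy \<open>v\<^sub>j = \<sigma> (u\<^sub>j\<^sub>-\<^sub>1 - u\<^sub>j)\<close>, which forces every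
  singular value to be \<open>0\<close> or \<open>\<ge> 1/2\<close>; the kernel is one-dimensional, spanned by \<open>e\<^sub>a\<close> with
  cokernel \<open>e\<^sub>b\<^sub>-\<^sub>1\<close>. Hence for \<open>\<tau> \<le> 1/2\<close> only the zero singular value is lifted and
  \<open>D = T \<plusminus> \<tau> e\<^sub>b\<^sub>-\<^sub>1 e\<^sub>a\<^sup>T\<close>, whose inverse maps the all-ones vector to \<open>\<plusminus>e\<^sub>a/\<tau> + e\<^sub>b\<^sub>-\<^sub>1\<close>.
  The columns of \<open>Z\<close> to the right of a block are all ones on it, so each Schur complement keeps
  the rows of \<open>Z\<close> above the last one and turns the last row into a constant whose modulus
  grows by the factor \<open>1/\<tau>\<close> per step. The \<open>k\<close>-th iterate thus has max-norm \<open>\<tau>\<^sup>1\<^sup>-\<^sup>k\<close>.\<close>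

lemma sum_eq_single:
  assumes "finite S" "p \<in> S" "\<And>q. q \<in> S \<Longrightarrow> q \<noteq> p \<Longrightarrow> g q = 0"
  shows "sum g S = g p"
  using assms by (simp add: sum.remove sum.neutral)

text \<open>Square matrices have two-sided inverses, so orthonormal columns force orthonormal rows.\<close>
lemma orthogonal_on_rows:
  fixes Q :: "nat \<Rightarrow> nat \<Rightarrow> real"
  assumes S: "finite S" and Q: "orthogonal_on S Q" and ij: "i \<in> S" "j \<in> S"
  shows "(\<Sum>l\<in>S. Q i l * Q j l) = (if i = j then 1 else 0)"
proof -
  define m where "m = card S"
  obtain h where h: "bij_betw h {0..<m} S"
    using ex_bij_betw_nat_finite[OF S] unfolding m_def by blast
  have reindex: "(\<Sum>l\<in>S. f l) = (\<Sum>l\<in>{0..<m}. f (h l))" for f :: "nat \<Rightarrow> real"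
    by (rule sum.reindex_bij_betw[OF h, symmetric])
  have h_inj: "h r = h c \<longleftrightarrow> r = c" if "r < m" "c < m" for r c
    using h that unfolding bij_betw_def inj_on_def by auto
  have h_in: "h r \<in> S" if "r < m" for r
    using h that by (auto dest: bij_betwE)
  define QM where "QM = mat m m (\<lambda>(r, c). Q (h r) (h c))"
  have "transpose_mat QM * QM = 1\<^sub>m m"
  proof (rule eq_matI)
    fix r c assume rc: "r < dim_row (1\<^sub>m m)" "c < dim_col (1\<^sub>m m)"
    have "(transpose_mat QM * QM) $$ (r, c) = (\<Sum>l\<in>{0..<m}. Q (h l) (h r) * Q (h l) (h c))"
      using rc by (simp add: QM_def scalar_prod_def)
    also have "\<dots> = (\<Sum>l\<in>S. Q l (h r) * Q l (h c))" by (simp add: reindex)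
    also have "\<dots> = 1\<^sub>m m $$ (r, c)"
      using Q rc h_in h_inj unfolding orthogonal_on_def by auto
    finally show "(transpose_mat QM * QM) $$ (r, c) = 1\<^sub>m m $$ (r, c)" .
  qed (simp_all add: QM_def)
  then have QQt: "QM * transpose_mat QM = 1\<^sub>m m"
    by (rule mat_mult_left_right_inverse[rotated 2]) (simp_all add: QM_def)
  have "i \<in> h ` {0..<m}" "j \<in> h ` {0..<m}"
    using h ij by (simp_all add: bij_betw_def)
  then obtain r c where rc: "r < m" "c < m" "i = h r" "j = h c" by auto
  have "(\<Sum>l\<in>S. Q i l * Q j l) = (QM * transpose_mat QM) $$ (r, c)"
    using rc by (simp add: QM_def scalar_prod_def reindex)
  then show ?thesis using QQt rc h_inj by simp
qed

lemma svd_on_entry: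
  assumes "svd_on S M U Sg V" "finite S" "i \<in> S" "j \<in> S"
  shows "M i j = (\<Sum>p\<in>S. U i p * Sg p p * V j p)"
proof -
  have "M i j = (\<Sum>p\<in>S. \<Sum>q\<in>S. U i p * Sg p q * V j q)"
    using assms unfolding svd_on_def by blast
  also have "\<dots> = (\<Sum>p\<in>S. U i p * Sg p p * V j p)"
    using assms(1,2) by (intro sum.cong refl sum_eq_single) (auto simp: svd_on_def)
  finally show ?thesis .
qed

lemma orthogonal_on_column_norm:
  assumes "orthogonal_on S Q" "p \<in> S"
  shows "(\<Sum>l\<in>S. (Q l p)\<^sup>2) = 1"
  using assms by (simp add: orthogonal_on_def power2_eq_square)

lemma orthogonal_on_contract:
  assumes "orthogonal_on S Q" "finite S" "p \<in> S"
  shows "(\<Sum>r\<in>S. f r * (\<Sum>l\<in>S. Q l p * Q l r)) = f p"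
proof -
  have "(\<Sum>r\<in>S. f r * (\<Sum>l\<in>S. Q l p * Q l r)) = (\<Sum>r\<in>S. if p = r then f r else 0)"
    using assms(1,3) unfolding orthogonal_on_def by (intro sum.cong) auto
  then show ?thesis using assms(2,3) by simp
qed

lemma svd_on_right_singular_vector:
  assumes svd: "svd_on S M U Sg V" and S: "finite S" "i \<in> S" "p \<in> S"
  shows "(\<Sum>j\<in>S. M i j * V j p) = U i p * Sg p p"
proof -
  have "(\<Sum>j\<in>S. M i j * V j p) = (\<Sum>j\<in>S. \<Sum>r\<in>S. U i r * Sg r r * (V j p * V j r))"
    using svd_on_entry[OF svd S(1,2)] by (intro sum.cong refl) (simp add: sum_distrib_left sum_distrib_right mult_ac)
  also have "\<dots> = (\<Sum>r\<in>S. U i r * Sg r r * (\<Sum>j\<in>S. V j p * V j r))"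
    by (subst sum.swap) (simp add: sum_distrib_left)
  also have "\<dots> = U i p * Sg p p"
    using svd S by (intro orthogonal_on_contract) (auto simp: svd_on_def)
  finally show ?thesis .
qed

lemma svd_on_left_singular_vector:
  assumes svd: "svd_on S M U Sg V" and S: "finite S" "j \<in> S" "p \<in> S"
  shows "(\<Sum>i\<in>S. M i j * U i p) = V j p * Sg p p"
proof -
  have "(\<Sum>i\<in>S. M i j * U i p) = (\<Sum>i\<in>S. \<Sum>r\<in>S. V j r * Sg r r * (U i p * U i r))"
    using svd_on_entry[OF svd S(1) _ S(2)] by (intro sum.cong refl) (simp add: sum_distrib_left sum_distrib_right mult_ac)
  also have "\<dots> = (\<Sum>r\<in>S. V j r * Sg r r * (\<Sum>i\<in>S. U i p * U i r))"
    by (subst sum.swap) (simp add: sum_distrib_left)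
  also have "\<dots> = V j p * Sg p p"
    using svd S by (intro orthogonal_on_contract) (auto simp: svd_on_def)
  finally show ?thesis .
qed

lemma mmul_on_orthogonal_diag_inverse:
  fixes U V :: "nat \<Rightarrow> nat \<Rightarrow> real"
  assumes S: "finite S" "i \<in> S" "j \<in> S"
    and U_rows: "\<forall>i\<in>S. \<forall>j\<in>S. (\<Sum>l\<in>S. U i l * U j l) = (if i = j then 1 else 0)"
    and V_cols: "orthogonal_on S V"
    and d: "\<forall>r\<in>S. d r \<noteq> 0"
  shows "mmul_on S (\<lambda>i j. \<Sum>r\<in>S. U i r * d r * V j r) (\<lambda>i j. \<Sum>r\<in>S. V i r * inverse (d r) * U j r) i j
           = (if i = j then 1 else 0)"
proof -
  have "mmul_on S (\<lambda>i j. \<Sum>r\<in>S. U i r * d r * V j r) (\<lambda>i j. \<Sum>r\<in>S. V i r * inverse (d r) * U j r) i j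
      = (\<Sum>q\<in>S. \<Sum>r\<in>S. \<Sum>r'\<in>S. U i r * d r * inverse (d r') * U j r' * (V q r * V q r'))"
    unfolding mmul_on_def sum_product by (simp add: mult_ac)
  also have "\<dots> = (\<Sum>r\<in>S. \<Sum>q\<in>S. \<Sum>r'\<in>S. U i r * d r * inverse (d r') * U j r' * (V q r * V q r'))"
    by (rule sum.swap)
  also have "\<dots> = (\<Sum>r\<in>S. \<Sum>r'\<in>S. U i r * d r * inverse (d r') * U j r' * (\<Sum>q\<in>S. V q r * V q r'))"
    by (subst sum.swap) (simp add: sum_distrib_left)
  also have "\<dots> = (\<Sum>r\<in>S. U i r * d r * inverse (d r) * U j r)"
    using S(1) V_cols by (intro sum.cong refl orthogonal_on_contract)
  also have "\<dots> = (\<Sum>r\<in>S. U i r * U j r)"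
    using d by (intro sum.cong refl) simp
  also have "\<dots> = (if i = j then 1 else 0)" using U_rows S by simp
  finally show ?thesis .
qed

lemma is_inverse_on_orthogonal_diag:
  fixes U V :: "nat \<Rightarrow> nat \<Rightarrow> real"
  assumes "finite S" "orthogonal_on S U" "orthogonal_on S V" "\<forall>r\<in>S. d r \<noteq> 0"
  shows "is_inverse_on S (\<lambda>i j. \<Sum>r\<in>S. U i r * d r * V j r)
           (\<lambda>i j. \<Sum>r\<in>S. V i r * inverse (d r) * U j r)"
  unfolding is_inverse_on_def
  using mmul_on_orthogonal_diag_inverse[of S _ _ U V d]
    mmul_on_orthogonal_diag_inverse[of S _ _ V U "\<lambda>r. inverse (d r)"] orthogonal_on_rows assms
  by simp

lemma is_inverse_on_cong:
  assumes "\<forall>i\<in>S. \<forall>j\<in>S. M i j = M' i j"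
  shows "is_inverse_on S M N \<longleftrightarrow> is_inverse_on S M' N"
  using assms unfolding is_inverse_on_def mmul_on_def by (simp cong: sum.cong)

lemma beam_D_entry:
  assumes "svd_on S M U Sg V" "finite S"
  shows "beam_D S \<tau> U Sg V i j = (\<Sum>p\<in>S. U i p * sigma_mod \<tau> Sg p p * V j p)"
  using assms unfolding beam_D_def
  by (intro sum.cong refl sum_eq_single) (auto simp: svd_on_def sigma_mod_def)

text \<open>Every modified singular value is at least \<open>\<tau>\<close>, so \<open>D\<^sub>k\<close> is always invertible.\<close>
lemma beam_D_is_inverse_on:
  assumes svd: "svd_on S M U Sg V" and S: "finite S" and tau: "0 < \<tau>"
  shows "is_inverse_on S (beam_D S \<tau> U Sg V)
           (\<lambda>i j. \<Sum>r\<in>S. V i r * inverse (sigma_mod \<tau> Sg r r) * U j r)"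
proof -
  have D: "\<forall>i\<in>S. \<forall>j\<in>S. beam_D S \<tau> U Sg V i j = (\<Sum>r\<in>S. U i r * sigma_mod \<tau> Sg r r * V j r)"
    using beam_D_entry[OF svd S] by blast
  have "is_inverse_on S (\<lambda>i j. \<Sum>r\<in>S. U i r * sigma_mod \<tau> Sg r r * V j r)
           (\<lambda>i j. \<Sum>r\<in>S. V i r * inverse (sigma_mod \<tau> Sg r r) * U j r)"
    using svd tau by (intro is_inverse_on_orthogonal_diag[OF S]) (auto simp: svd_on_def sigma_mod_def)
  then show ?thesis using is_inverse_on_cong[OF D] by simp
qed

lemma inv_on_apply:
  assumes S: "finite S" and inv: "is_inverse_on S M N" and p: "p \<in> S"
    and solves: "\<forall>q\<in>S. (\<Sum>r\<in>S. M q r * y r) = x q"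
  shows "(\<Sum>q\<in>S. inv_on S M p q * x q) = y p"
proof -
  have Mi: "is_inverse_on S M (inv_on S M)"
    using someI[of "is_inverse_on S M", OF inv] unfolding inv_on_def .
  have "(\<Sum>q\<in>S. inv_on S M p q * x q) = (\<Sum>q\<in>S. inv_on S M p q * (\<Sum>r\<in>S. M q r * y r))"
    using solves by simp
  also have "\<dots> = (\<Sum>q\<in>S. \<Sum>r\<in>S. inv_on S M p q * M q r * y r)"
    by (simp add: sum_distrib_left mult.assoc)
  also have "\<dots> = (\<Sum>r\<in>S. mmul_on S (inv_on S M) M p r * y r)"
    unfolding mmul_on_def by (subst sum.swap) (simp add: sum_distrib_right)
  also have "\<dots> = (\<Sum>r\<in>S. if p = r then y r else 0)"
    using Mi p unfolding is_inverse_on_def by (intro sum.cong) auto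
  also have "\<dots> = y p" using S p by simp
  finally show ?thesis .
qed

definition strict_upper_ones :: "nat \<Rightarrow> nat \<Rightarrow> real" where
  "strict_upper_ones i j = (if i < j then 1 else 0)"

lemma sum_strict_upper_ones_row:
  assumes "a \<le> i"
  shows "(\<Sum>j\<in>{a..<b}. strict_upper_ones i j * f j) = sum f {Suc i..<b}"
proof -
  have "(\<Sum>j\<in>{a..<b}. strict_upper_ones i j * f j) = (\<Sum>j\<in>{a..<b}. if j \<in> {Suc i..<b} then f j else 0)"
    by (intro sum.cong) (auto simp: strict_upper_ones_def)
  also have "\<dots> = sum f ({a..<b} \<inter> {Suc i..<b})" by (rule sum.inter_restrict[symmetric]) simp
  also have "{a..<b} \<inter> {Suc i..<b} = {Suc i..<b}" using assms by auto
  finally show ?thesis .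
qed

lemma sum_strict_upper_ones_col:
  assumes "j \<le> b"
  shows "(\<Sum>i\<in>{a..<b}. strict_upper_ones i j * f i) = sum f {a..<j}"
proof -
  have "(\<Sum>i\<in>{a..<b}. strict_upper_ones i j * f i) = (\<Sum>i\<in>{a..<b}. if i \<in> {a..<j} then f i else 0)"
    by (intro sum.cong) (auto simp: strict_upper_ones_def)
  also have "\<dots> = sum f ({a..<b} \<inter> {a..<j})" by (rule sum.inter_restrict[symmetric]) simp
  also have "{a..<b} \<inter> {a..<j} = {a..<j}" using assms by auto
  finally show ?thesis .
qed

text \<open>A singular pair \<open>(u, v)\<close> with singular value \<open>\<sigma>\<close> of the strictly upper triangular
  all-ones matrix on \<open>{a..<b}\<close> is characterised by suffix sums of \<open>v\<close> and prefix sums of \<open>u\<close>.\<close>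
lemma suffix_sums_diff:
  fixes u v :: "nat \<Rightarrow> real"
  assumes suffix: "\<forall>i\<in>{a..<b}. sum v {Suc i..<b} = \<sigma> * u i" and i: "i \<in> {a..<b}" "Suc i < b"
  shows "v (Suc i) = \<sigma> * (u i - u (Suc i))"
proof -
  have "sum v {Suc i..<b} = \<sigma> * u i" "sum v {Suc (Suc i)..<b} = \<sigma> * u (Suc i)"
    using suffix[rule_format, of i] suffix[rule_format, of "Suc i"] i by auto
  moreover have "sum v {Suc i..<b} = v (Suc i) + sum v {Suc (Suc i)..<b}"
    using i by (simp add: sum.atLeast_Suc_lessThan)
  ultimately show ?thesis by (simp add: algebra_simps)
qed

lemma prefix_sums_diff:
  fixes u v :: "nat \<Rightarrow> real"
  assumes prefix: "\<forall>j\<in>{a..<b}. sum u {a..<j} = \<sigma> * v j" and i: "i \<in> {a..<b}" "Suc i < b"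
  shows "u i = \<sigma> * (v (Suc i) - v i)"
proof -
  have "sum u {a..<Suc i} = \<sigma> * v (Suc i)" "sum u {a..<i} = \<sigma> * v i"
    using prefix[rule_format, of i] prefix[rule_format, of "Suc i"] i by auto
  moreover have "sum u {a..<Suc i} = sum u {a..<i} + u i" using i by simp
  ultimately show ?thesis by (simp add: algebra_simps)
qed

text \<open>From \<open>v\<^sub>j = \<sigma> (u\<^sub>j\<^sub>-\<^sub>1 - u\<^sub>j)\<close> and \<open>v\<^sub>a = 0\<close> we get
  \<open>1 = |v|\<^sup>2 \<le> 2\<sigma>\<^sup>2 (|u|\<^sup>2 + |u|\<^sup>2) = 4\<sigma>\<^sup>2\<close>.\<close>
lemma upper_ones_singular_value_ge_half:
  fixes u v :: "nat \<Rightarrow> real"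
  assumes suffix: "\<forall>i\<in>{a..<b}. sum v {Suc i..<b} = \<sigma> * u i"
    and prefix: "\<forall>j\<in>{a..<b}. sum u {a..<j} = \<sigma> * v j"
    and v_unit: "(\<Sum>j\<in>{a..<b}. (v j)\<^sup>2) = 1" and u_unit: "(\<Sum>j\<in>{a..<b}. (u j)\<^sup>2) = 1"
    and \<sigma>: "0 < \<sigma>"
  shows "1 / 2 \<le> \<sigma>"
proof -
  have ab: "a < b" using v_unit by (cases "a < b") auto
  then obtain c where c: "b = Suc c" by (cases b) auto
  have "v a = 0" using prefix[rule_format, of a] ab \<sigma> by simp
  then have "1 = (\<Sum>j\<in>{Suc a..<b}. (v j)\<^sup>2)"
    using v_unit ab by (simp add: sum.atLeast_Suc_lessThan)
  also have "\<dots> = (\<Sum>j\<in>{Suc a..<b}. \<sigma>\<^sup>2 * (u (j - 1) - u j)\<^sup>2)"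
  proof (intro sum.cong refl)
    fix j assume j: "j \<in> {Suc a..<b}"
    then have "j - 1 \<in> {a..<b}" "Suc (j - 1) < b" "Suc (j - 1) = j" by auto
    then have "v j = \<sigma> * (u (j - 1) - u j)"
      using suffix_sums_diff[OF suffix, of "j - 1"] by simp
    then show "(v j)\<^sup>2 = \<sigma>\<^sup>2 * (u (j - 1) - u j)\<^sup>2" by (simp add: power_mult_distrib)
  qed
  also have "\<dots> \<le> (\<Sum>j\<in>{Suc a..<b}. \<sigma>\<^sup>2 * (2 * ((u (j - 1))\<^sup>2 + (u j)\<^sup>2)))"
  proof (intro sum_mono)
    fix j
    have "(u (j - 1) - u j)\<^sup>2 = 2 * ((u (j - 1))\<^sup>2 + (u j)\<^sup>2) - (u (j - 1) + u j)\<^sup>2"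
      by (simp add: power2_eq_square algebra_simps)
    then have "(u (j - 1) - u j)\<^sup>2 \<le> 2 * ((u (j - 1))\<^sup>2 + (u j)\<^sup>2)"
      using zero_le_power2[of "u (j - 1) + u j"] by linarith
    then show "\<sigma>\<^sup>2 * (u (j - 1) - u j)\<^sup>2 \<le> \<sigma>\<^sup>2 * (2 * ((u (j - 1))\<^sup>2 + (u j)\<^sup>2))"
      by (rule mult_left_mono) simp
  qed
  also have "\<dots> = \<sigma>\<^sup>2 * (2 * ((\<Sum>j\<in>{Suc a..<b}. (u (j - 1))\<^sup>2) + (\<Sum>j\<in>{Suc a..<b}. (u j)\<^sup>2)))"
    by (simp only: sum_distrib_left[symmetric] sum.distrib)
  also have "\<dots> \<le> \<sigma>\<^sup>2 * (2 * (1 + 1))"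
  proof -
    have "(\<Sum>j\<in>{Suc a..<b}. (u (j - 1))\<^sup>2) = (\<Sum>j\<in>{a..<c}. (u j)\<^sup>2)"
      unfolding c sum.shift_bounds_Suc_ivl by simp
    also have "\<dots> \<le> (\<Sum>j\<in>{a..<b}. (u j)\<^sup>2)" unfolding c by (intro sum_mono2) auto
    finally have "(\<Sum>j\<in>{Suc a..<b}. (u (j - 1))\<^sup>2) \<le> 1" using u_unit by simp
    moreover have "(\<Sum>j\<in>{Suc a..<b}. (u j)\<^sup>2) \<le> 1"
      using u_unit sum_mono2[of "{a..<b}" "{Suc a..<b}" "\<lambda>j. (u j)\<^sup>2"] by simp
    ultimately show ?thesis by (intro mult_left_mono add_mono) simp_all
  qed
  finally have "(1 / 2)\<^sup>2 \<le> \<sigma>\<^sup>2" by (simp add: power2_eq_square)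
  then show ?thesis using \<sigma> power2_le_imp_le[of "1 / 2" \<sigma>] by linarith
qed

lemma upper_ones_singular_pair:
  assumes svd: "svd_on {a..<b} M U Sg V"
    and M: "\<forall>i\<in>{a..<b}. \<forall>j\<in>{a..<b}. M i j = strict_upper_ones i j"
    and p: "p \<in> {a..<b}"
  shows "\<forall>i\<in>{a..<b}. sum (\<lambda>j. V j p) {Suc i..<b} = Sg p p * U i p"
    and "\<forall>j\<in>{a..<b}. sum (\<lambda>i. U i p) {a..<j} = Sg p p * V j p"
proof -
  show "\<forall>i\<in>{a..<b}. sum (\<lambda>j. V j p) {Suc i..<b} = Sg p p * U i p"
  proof
    fix i assume i: "i \<in> {a..<b}"
    have "sum (\<lambda>j. V j p) {Suc i..<b} = (\<Sum>j\<in>{a..<b}. strict_upper_ones i j * V j p)"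
      using i by (simp add: sum_strict_upper_ones_row)
    also have "\<dots> = (\<Sum>j\<in>{a..<b}. M i j * V j p)" using M i by (intro sum.cong) auto
    also have "\<dots> = Sg p p * U i p" using svd_on_right_singular_vector[OF svd _ i p] by simp
    finally show "sum (\<lambda>j. V j p) {Suc i..<b} = Sg p p * U i p" .
  qed
  show "\<forall>j\<in>{a..<b}. sum (\<lambda>i. U i p) {a..<j} = Sg p p * V j p"
  proof
    fix j assume j: "j \<in> {a..<b}"
    have "sum (\<lambda>i. U i p) {a..<j} = (\<Sum>i\<in>{a..<b}. strict_upper_ones i j * U i p)"
      using j by (simp add: sum_strict_upper_ones_col)
    also have "\<dots> = (\<Sum>i\<in>{a..<b}. M i j * U i p)" using M j by (intro sum.cong) auto
    also have "\<dots> = Sg p p * V j p" using svd_on_left_singular_vector[OF svd _ j p] by simp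
    finally show "sum (\<lambda>i. U i p) {a..<j} = Sg p p * V j p" .
  qed
qed

lemma upper_ones_null_singular_vectors:
  assumes svd: "svd_on {a..<b} M U Sg V"
    and M: "\<forall>i\<in>{a..<b}. \<forall>j\<in>{a..<b}. M i j = strict_upper_ones i j"
    and p: "p \<in> {a..<b}" and null: "Sg p p = 0"
  shows "\<forall>j\<in>{a..<b}. j \<noteq> a \<longrightarrow> V j p = 0" and "(V a p)\<^sup>2 = 1"
    and "\<forall>i\<in>{a..<b}. i \<noteq> b - 1 \<longrightarrow> U i p = 0" and "(U (b - 1) p)\<^sup>2 = 1"
proof -
  have ab: "a < b" using p by simp
  have oU: "orthogonal_on {a..<b} U" and oV: "orthogonal_on {a..<b} V"
    using svd by (auto simp: svd_on_def)
  note pair = upper_ones_singular_pair[OF svd M p, unfolded null]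
  show V: "\<forall>j\<in>{a..<b}. j \<noteq> a \<longrightarrow> V j p = 0"
  proof (intro ballI impI)
    fix j assume "j \<in> {a..<b}" "j \<noteq> a"
    then show "V j p = 0"
      using suffix_sums_diff[OF pair(1), of "j - 1"] by (cases j) auto
  qed
  show U: "\<forall>i\<in>{a..<b}. i \<noteq> b - 1 \<longrightarrow> U i p = 0"
  proof (intro ballI impI)
    fix i assume "i \<in> {a..<b}" "i \<noteq> b - 1"
    then show "U i p = 0" using prefix_sums_diff[OF pair(2), of i] by auto
  qed
  have "(\<Sum>l\<in>{a..<b}. (V l p)\<^sup>2) = (V a p)\<^sup>2" using V ab by (intro sum_eq_single) auto
  then show "(V a p)\<^sup>2 = 1" using orthogonal_on_column_norm[OF oV p] by simp
  have "(\<Sum>l\<in>{a..<b}. (U l p)\<^sup>2) = (U (b - 1) p)\<^sup>2" using U ab by (intro sum_eq_single) auto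
  then show "(U (b - 1) p)\<^sup>2 = 1" using orthogonal_on_column_norm[OF oU p] by simp
qed

text \<open>Row \<open>a\<close> of \<open>V\<close> is a unit vector, but it vanishes in every column with a nonzero
  singular value.\<close>
lemma upper_ones_svd_has_null:
  assumes ab: "a < b" and svd: "svd_on {a..<b} M U Sg V"
    and M: "\<forall>i\<in>{a..<b}. \<forall>j\<in>{a..<b}. M i j = strict_upper_ones i j"
  obtains p0 where "p0 \<in> {a..<b}" "Sg p0 p0 = 0"
proof -
  have aS: "a \<in> {a..<b}" using ab by simp
  have oV: "orthogonal_on {a..<b} V" using svd by (simp add: svd_on_def)
  have "\<exists>p\<in>{a..<b}. Sg p p = 0"
  proof (rule ccontr)
    assume nonzero: "\<not> (\<exists>p\<in>{a..<b}. Sg p p = 0)"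
    have "V a p = 0" if "p \<in> {a..<b}" for p
      using upper_ones_singular_pair(2)[OF svd M that, rule_format, OF aS] nonzero that by auto
    then have "(\<Sum>l\<in>{a..<b}. V a l * V a l) = 0" by simp
    then show False using orthogonal_on_rows[OF _ oV aS aS] by simp
  qed
  then show ?thesis using that by blast
qed

lemma upper_ones_svd_kernel:
  assumes ab: "a < b" and svd: "svd_on {a..<b} M U Sg V"
    and M: "\<forall>i\<in>{a..<b}. \<forall>j\<in>{a..<b}. M i j = strict_upper_ones i j"
  obtains p0 s where "p0 \<in> {a..<b}" "Sg p0 p0 = 0" "\<forall>p\<in>{a..<b}. p \<noteq> p0 \<longrightarrow> 1 / 2 \<le> Sg p p"
    "s = 1 \<or> s = -1"
    "\<forall>i\<in>{a..<b}. \<forall>j\<in>{a..<b}. U i p0 * V j p0 = (if i = b - 1 \<and> j = a then s else 0)"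
proof -
  have aS: "a \<in> {a..<b}" using ab by simp
  have oU: "orthogonal_on {a..<b} U" and oV: "orthogonal_on {a..<b} V"
    and Sg_nonneg: "\<forall>p\<in>{a..<b}. 0 \<le> Sg p p"
    using svd by (auto simp: svd_on_def)
  have ge_half: "1 / 2 \<le> Sg p p" if p: "p \<in> {a..<b}" "Sg p p \<noteq> 0" for p
  proof (rule upper_ones_singular_value_ge_half[OF upper_ones_singular_pair[OF svd M p(1)]])
    show "(\<Sum>j\<in>{a..<b}. (V j p)\<^sup>2) = 1" "(\<Sum>j\<in>{a..<b}. (U j p)\<^sup>2) = 1"
      using orthogonal_on_column_norm oU oV p(1) by auto
    show "0 < Sg p p" using Sg_nonneg p by force
  qed
  obtain p0 where p0: "p0 \<in> {a..<b}" "Sg p0 p0 = 0"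
    using upper_ones_svd_has_null[OF ab svd M] by blast
  note null = upper_ones_null_singular_vectors[OF svd M]
  have unique: "p = p0" if p: "p \<in> {a..<b}" "Sg p p = 0" for p
  proof (rule ccontr)
    assume "p \<noteq> p0"
    then have "(\<Sum>l\<in>{a..<b}. V l p * V l p0) = 0" using oV p p0 by (simp add: orthogonal_on_def)
    moreover have "(\<Sum>l\<in>{a..<b}. V l p * V l p0) = V a p * V a p0"
      using null(1)[OF p] aS by (intro sum_eq_single) auto
    moreover have "(V a p * V a p0)\<^sup>2 = 1" using null(2)[OF p] null(2)[OF p0] by (simp add: power_mult_distrib)
    ultimately show False by (metis zero_neq_one zero_power2)
  qed
  define s where "s = U (b - 1) p0 * V a p0"
  have "s\<^sup>2 = 1" using null(2,4)[OF p0] by (simp add: s_def power_mult_distrib)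
  then have "s = 1 \<or> s = -1" by (simp add: power2_eq_1_iff)
  moreover have "\<forall>i\<in>{a..<b}. \<forall>j\<in>{a..<b}. U i p0 * V j p0 = (if i = b - 1 \<and> j = a then s else 0)"
    using null(1,3)[OF p0] by (auto simp: s_def)
  ultimately show ?thesis using that p0 ge_half unique by blast
qed

lemma beam_D_upper_ones:
  assumes ab: "a < b" and svd: "svd_on {a..<b} M U Sg V"
    and M: "\<forall>i\<in>{a..<b}. \<forall>j\<in>{a..<b}. M i j = strict_upper_ones i j"
    and tau: "0 \<le> \<tau>" "\<tau> \<le> 1 / 2"
  obtains s where "s = 1 \<or> s = -1"
    "\<forall>i\<in>{a..<b}. \<forall>j\<in>{a..<b}.
       beam_D {a..<b} \<tau> U Sg V i j = strict_upper_ones i j + (if i = b - 1 \<and> j = a then \<tau> * s else 0)"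
proof -
  obtain p0 s where p0: "p0 \<in> {a..<b}" "Sg p0 p0 = 0"
    and others: "\<forall>p\<in>{a..<b}. p \<noteq> p0 \<longrightarrow> 1 / 2 \<le> Sg p p"
    and s: "s = 1 \<or> s = -1"
    and null: "\<forall>i\<in>{a..<b}. \<forall>j\<in>{a..<b}. U i p0 * V j p0 = (if i = b - 1 \<and> j = a then s else 0)"
    using upper_ones_svd_kernel[OF ab svd M] by blast
  have sigma: "sigma_mod \<tau> Sg p p = Sg p p + (if p = p0 then \<tau> else 0)" if "p \<in> {a..<b}" for p
    using p0 others tau that by (auto simp: sigma_mod_def)
  have "beam_D {a..<b} \<tau> U Sg V i j = strict_upper_ones i j + (if i = b - 1 \<and> j = a then \<tau> * s else 0)"
    if ij: "i \<in> {a..<b}" "j \<in> {a..<b}" for i j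
  proof -
    have "beam_D {a..<b} \<tau> U Sg V i j
        = (\<Sum>p\<in>{a..<b}. U i p * Sg p p * V j p + (if p = p0 then \<tau> * (U i p0 * V j p0) else 0))"
      unfolding beam_D_entry[OF svd finite_atLeastLessThan] using sigma
      by (intro sum.cong refl) (auto simp: algebra_simps)
    also have "\<dots> = M i j + \<tau> * (U i p0 * V j p0)"
      using svd_on_entry[OF svd _ ij] p0 by (simp add: sum.distrib)
    finally show ?thesis using M null ij by simp
  qed
  with s that show ?thesis by blast
qed

lemma inv_on_beam_D_upper_ones_row_sums:
  assumes ab: "a + 2 \<le> b" and svd: "svd_on {a..<b} M U Sg V"
    and M: "\<forall>i\<in>{a..<b}. \<forall>j\<in>{a..<b}. M i j = strict_upper_ones i j"
    and tau: "0 < \<tau>" "\<tau> \<le> 1 / 2"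
  obtains s where "s = 1 \<or> s = -1"
    "\<forall>p\<in>{a..<b}. (\<Sum>q\<in>{a..<b}. inv_on {a..<b} (beam_D {a..<b} \<tau> U Sg V) p q)
        = (if p = a then s / \<tau> else 0) + (if p = b - 1 then 1 else 0)"
proof -
  let ?D = "beam_D {a..<b} \<tau> U Sg V"
  obtain s where s: "s = 1 \<or> s = -1"
    and D: "\<forall>i\<in>{a..<b}. \<forall>j\<in>{a..<b}.
      ?D i j = strict_upper_ones i j + (if i = b - 1 \<and> j = a then \<tau> * s else 0)"
    using beam_D_upper_ones[OF _ svd M less_imp_le[OF tau(1)] tau(2)] ab by auto
  define y where "y r = (if r = a then s / \<tau> else 0) + (if r = b - 1 then 1 else 0)" for r
  have aS: "a \<in> {a..<b}" and bS: "b - 1 \<in> {a..<b}" and "a \<noteq> b - 1" using ab by auto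
  have solves: "(\<Sum>r\<in>{a..<b}. ?D q r * y r) = 1" if q: "q \<in> {a..<b}" for q
  proof -
    have "(\<Sum>r\<in>{a..<b}. ?D q r * y r)
        = (\<Sum>r\<in>{a..<b}. (if r = a then ?D q a * (s / \<tau>) else 0) + (if r = b - 1 then ?D q (b - 1) else 0))"
      using \<open>a \<noteq> b - 1\<close> by (intro sum.cong) (auto simp: y_def)
    also have "\<dots> = ?D q a * (s / \<tau>) + ?D q (b - 1)" using aS bS by (simp add: sum.distrib)
    also have "\<dots> = 1"
    proof (cases "q = b - 1")
      case True
      then show ?thesis using D aS bS \<open>a \<noteq> b - 1\<close> s tau(1) by (auto simp: strict_upper_ones_def)
    next
      case False
      then show ?thesis using D aS bS q by (auto simp: strict_upper_ones_def)
    qed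
    finally show ?thesis .
  qed
  have "(\<Sum>q\<in>{a..<b}. inv_on {a..<b} ?D p q) = y p" if "p \<in> {a..<b}" for p
    using inv_on_apply[OF _ beam_D_is_inverse_on[OF svd _ tau(1)] that, of y "\<lambda>_. 1"] solves
    by simp
  with s that show ?thesis unfolding y_def by simp
qed

lemma zielke_block_strict_upper_ones:
  assumes "1 \<le> a" "b \<le> n" "i \<in> {a..<b}" "j \<in> {a..<b}"
  shows "zielke n i j = strict_upper_ones i j"
  using assms by (auto simp: zielke_def strict_upper_ones_def)

lemma schur_complement_zielke_step:
  assumes a: "1 \<le> a" "a + 2 \<le> b" "b \<le> n" and tau: "0 < \<tau>" "\<tau> \<le> 1 / 2"
    and M: "\<forall>i\<in>{a..n}. \<forall>j\<in>{a..n}. i \<noteq> n \<longrightarrow> M i j = zielke n i j"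
    and svd: "svd_on {a..<b} M U Sg V"
  obtains s where "s = 1 \<or> s = -1"
    "\<forall>i\<in>{b..n}. \<forall>j\<in>{b..n}.
       M i j - (\<Sum>p\<in>{a..<b}. \<Sum>q\<in>{a..<b}. M i p * inv_on {a..<b} (beam_D {a..<b} \<tau> U Sg V) p q * M q j)
       = (if i = n then M n j - M n a * s / \<tau> - M n (b - 1) else zielke n i j)"
proof -
  let ?Di = "inv_on {a..<b} (beam_D {a..<b} \<tau> U Sg V)"
  have "\<forall>i\<in>{a..<b}. \<forall>j\<in>{a..<b}. M i j = strict_upper_ones i j"
    using M a zielke_block_strict_upper_ones[OF a(1) a(3)] by auto
  then obtain s where s: "s = 1 \<or> s = -1"
    and row_sums: "\<forall>p\<in>{a..<b}.
      (\<Sum>q\<in>{a..<b}. ?Di p q) = (if p = a then s / \<tau> else 0) + (if p = b - 1 then 1 else 0)"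
    using inv_on_beam_D_upper_ones_row_sums[OF a(2) svd _ tau] by blast
  have correction: "(\<Sum>p\<in>{a..<b}. \<Sum>q\<in>{a..<b}. M i p * ?Di p q * M q j) = M i a * s / \<tau> + M i (b - 1)"
    if j: "j \<in> {b..n}" for i j
  proof -
    have "M q j = 1" if "q \<in> {a..<b}" for q
      using M a j that by (auto simp: zielke_def)
    then have "(\<Sum>p\<in>{a..<b}. \<Sum>q\<in>{a..<b}. M i p * ?Di p q * M q j)
        = (\<Sum>p\<in>{a..<b}. M i p * (\<Sum>q\<in>{a..<b}. ?Di p q))"
      by (simp add: sum_distrib_left)
    also have "\<dots> = (\<Sum>p\<in>{a..<b}. (if p = a then M i a * s / \<tau> else 0) + (if p = b - 1 then M i (b - 1) else 0))"
      using row_sums a by (intro sum.cong) auto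
    also have "\<dots> = M i a * s / \<tau> + M i (b - 1)"
      using a by (simp add: sum.distrib not_less_eq_eq)
    finally show ?thesis .
  qed
  have "M i j - (\<Sum>p\<in>{a..<b}. \<Sum>q\<in>{a..<b}. M i p * ?Di p q * M q j)
       = (if i = n then M n j - M n a * s / \<tau> - M n (b - 1) else zielke n i j)"
    if ij: "i \<in> {b..n}" "j \<in> {b..n}" for i j
  proof (cases "i = n")
    case False
    have "a \<in> {a..n}" "b - 1 \<in> {a..n}" "i \<in> {a..n}" "j \<in> {a..n}" using a ij by auto
    then have "M i a = zielke n i a" "M i (b - 1) = zielke n i (b - 1)" "M i j = zielke n i j"
      using M False by blast+
    moreover have "zielke n i a = 0" "zielke n i (b - 1) = 0"
      using a ij False by (auto simp: zielke_def)
    ultimately show ?thesis using correction[OF ij(2)] False by simp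
  qed (use correction[OF ij(2)] in simp)
  with s that show ?thesis by blast
qed

lemma maxnorm_on_image: "maxnorm_on R M = Max ((\<lambda>(i, j). \<bar>M i j\<bar>) ` (R \<times> R))"
  unfolding maxnorm_on_def by (rule arg_cong[where f = Max]) auto

lemma maxnorm_on_eqI:
  assumes "finite R" "\<forall>i\<in>R. \<forall>j\<in>R. \<bar>M i j\<bar> \<le> v" "i0 \<in> R" "j0 \<in> R" "\<bar>M i0 j0\<bar> = v"
  shows "maxnorm_on R M = v"
  unfolding maxnorm_on_image using assms by (intro Max_eqI) force+

lemma maxnorm_on_cong:
  assumes "\<forall>i\<in>R. \<forall>j\<in>R. M i j = M' i j"
  shows "maxnorm_on R M = maxnorm_on R M'"
  unfolding maxnorm_on_image using assms by (intro arg_cong[where f = Max] image_cong) auto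

lemma maxnorm_zielke:
  assumes "2 \<le> n"
  shows "maxnorm_on {1..n} (zielke n) = 1"
  using assms by (intro maxnorm_on_eqI[of _ _ _ 1 2]) (auto simp: zielke_def)

definition zielke_const_last_row :: "nat \<Rightarrow> real \<Rightarrow> nat \<Rightarrow> nat \<Rightarrow> real" where
  "zielke_const_last_row n c i j = (if i = n then c else zielke n i j)"

lemma maxnorm_zielke_const_last_row:
  assumes "a \<le> n" "1 \<le> \<bar>c\<bar>"
  shows "maxnorm_on {a..n} (zielke_const_last_row n c) = \<bar>c\<bar>"
  using assms
  by (intro maxnorm_on_eqI[of _ _ _ n n]) (auto simp: zielke_const_last_row_def zielke_def)

lemma powr_one_minus_Suc:
  fixes \<tau> :: real
  assumes "0 < \<tau>"
  shows "\<tau> powr (1 - real (Suc k)) = \<tau> powr (1 - real k) / \<tau>"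
proof -
  have "\<tau> powr (1 - real (Suc k)) = \<tau> powr ((1 - real k) - 1)" by simp
  also have "\<dots> = \<tau> powr (1 - real k) / \<tau>" by (subst powr_diff) (use assms in simp)
  finally show ?thesis .
qed

locale beam_on_zielke =
  fixes n :: nat and I :: "nat list" and tau :: real
    and A U Sg V :: "nat \<Rightarrow> nat \<Rightarrow> nat \<Rightarrow> real"
  assumes n_ge_2: "n \<ge> 2"
    and length_I: "length I \<ge> 2"
    and sorted_I: "sorted_wrt (<) I"
    and hd_I: "hd I = 1" and last_I: "last I = n + 1"
    and blocks_ge_2: "\<forall>k\<in>{1..length I - 1}. I ! k - I ! (k - 1) \<ge> 2"
    and tau_pos: "0 < tau" and tau_le: "tau \<le> 1 / 2"
    and run: "beam_run n I tau A U Sg V"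
begin

abbreviation nt :: nat where "nt \<equiv> length I - 1"

lemma I_nonempty: "I \<noteq> []"
  using length_I by auto

lemma I_first: "I ! 0 = 1"
  using hd_I I_nonempty by (simp add: hd_conv_nth)

lemma I_last: "I ! nt = n + 1"
  using last_I I_nonempty by (simp add: last_conv_nth)

lemma I_less: "i < j \<Longrightarrow> j \<le> nt \<Longrightarrow> I ! i < I ! j"
  using sorted_wrt_nth_less[OF sorted_I] length_I by auto

lemma I_ge_1: "k \<le> nt \<Longrightarrow> 1 \<le> I ! k"
  using I_less[of 0 k] I_first by (cases k) auto

lemma I_le_n: "k < nt \<Longrightarrow> I ! k \<le> n"
  using I_less[of k nt] I_last by simp

lemma block_gap: "k \<in> {1..nt} \<Longrightarrow> I ! (k - 1) + 2 \<le> I ! k"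
  using blocks_ge_2 by fastforce

lemma iterate_step:
  assumes k: "k \<in> {1..<nt}"
    and Ak: "\<forall>i\<in>{I ! (k - 1)..n}. \<forall>j\<in>{I ! (k - 1)..n}. i \<noteq> n \<longrightarrow> A k i j = zielke n i j"
  obtains s where "s = 1 \<or> s = -1"
    "\<forall>i\<in>{I ! k..n}. \<forall>j\<in>{I ! k..n}. A (Suc k) i j =
       (if i = n then A k n j - A k n (I ! (k - 1)) * s / tau - A k n (I ! k - 1) else zielke n i j)"
proof -
  have ab: "1 \<le> I ! (k - 1)" "I ! (k - 1) + 2 \<le> I ! k" "I ! k \<le> n"
    using I_ge_1[of "k - 1"] block_gap[of k] I_le_n[of k] k by auto
  have svd: "svd_on {I ! (k - 1)..<I ! k} (A k) (U k) (Sg k) (V k)"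
    using run k by (auto simp: beam_run_def blk_def)
  obtain s where "s = 1 \<or> s = -1"
    and "\<forall>i\<in>{I ! k..n}. \<forall>j\<in>{I ! k..n}.
       A k i j - (\<Sum>p\<in>blk I k. \<Sum>q\<in>blk I k.
         A k i p * inv_on (blk I k) (beam_D (blk I k) tau (U k) (Sg k) (V k)) p q * A k q j)
       = (if i = n then A k n j - A k n (I ! (k - 1)) * s / tau - A k n (I ! k - 1) else zielke n i j)"
    using schur_complement_zielke_step[OF ab tau_pos tau_le Ak svd] unfolding blk_def by blast
  moreover have "\<forall>i\<in>{I ! k..n}. \<forall>j\<in>{I ! k..n}. A (Suc k) i j = A k i j -
      (\<Sum>p\<in>blk I k. \<Sum>q\<in>blk I k.
         A k i p * inv_on (blk I k) (beam_D (blk I k) tau (U k) (Sg k) (V k)) p q * A k q j)"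
    using run k by (simp add: beam_run_def)
  ultimately show ?thesis using that by simp
qed

lemma iterate_const_last_row:
  assumes "2 \<le> k" "k \<le> nt"
  shows "\<exists>c. \<bar>c\<bar> = tau powr (1 - real k) \<and>
           (\<forall>i\<in>{I ! (k - 1)..n}. \<forall>j\<in>{I ! (k - 1)..n}. A k i j = zielke_const_last_row n c i j)"
  using assms
proof (induction k rule: nat_induct_at_least)
  case base
  have "1 \<in> {1..<nt}" using base by simp
  have A1: "\<forall>i\<in>{I ! 0..n}. \<forall>j\<in>{I ! 0..n}. A 1 i j = zielke n i j"
    using run I_first by (simp add: beam_run_def)
  then have "\<forall>i\<in>{I ! (1 - 1)..n}. \<forall>j\<in>{I ! (1 - 1)..n}. i \<noteq> n \<longrightarrow> A 1 i j = zielke n i j"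
    by simp
  then obtain s where s: "s = 1 \<or> s = -1"
    and step: "\<forall>i\<in>{I ! 1..n}. \<forall>j\<in>{I ! 1..n}. A (Suc 1) i j =
       (if i = n then A 1 n j - A 1 n (I ! (1 - 1)) * s / tau - A 1 n (I ! 1 - 1) else zielke n i j)"
    by (rule iterate_step[OF \<open>1 \<in> {1..<nt}\<close>])
  have A1_last_row: "A 1 n x = zielke n n x" if "x \<in> {1..n}" for x
    using A1 I_first that n_ge_2 by simp
  have "3 \<le> I ! 1" "I ! 1 \<le> n"
    using block_gap[of 1] I_first I_le_n[of 1] base by auto
  then have "I ! 1 - 1 \<in> {1..n}" "I ! 1 - 1 \<noteq> 1" by auto
  then have "A 1 n (I ! 0) = -1" "A 1 n (I ! 1 - 1) = 0"
    using A1_last_row[of 1] A1_last_row[of "I ! 1 - 1"] I_first n_ge_2 by (auto simp: zielke_def)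
  moreover have "A 1 n j = 0" if "j \<in> {I ! 1..n}" for j
    using A1_last_row[of j] \<open>3 \<le> I ! 1\<close> that by (auto simp: zielke_def)
  ultimately have "\<forall>i\<in>{I ! 1..n}. \<forall>j\<in>{I ! 1..n}. A 2 i j = zielke_const_last_row n (s / tau) i j"
    using step by (simp add: zielke_const_last_row_def numeral_2_eq_2)
  moreover have "\<bar>s / tau\<bar> = tau powr (1 - real 2)"
    using s tau_pos by (auto simp: powr_minus divide_inverse)
  ultimately show ?case by (intro exI[of _ "s / tau"]) simp
next
  case (Suc k)
  then obtain c where c: "\<bar>c\<bar> = tau powr (1 - real k)"
    and Ak: "\<forall>i\<in>{I ! (k - 1)..n}. \<forall>j\<in>{I ! (k - 1)..n}. A k i j = zielke_const_last_row n c i j"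
    by auto
  have "k \<in> {1..<nt}" using Suc by simp
  have "\<forall>i\<in>{I ! (k - 1)..n}. \<forall>j\<in>{I ! (k - 1)..n}. i \<noteq> n \<longrightarrow> A k i j = zielke n i j"
    using Ak by (simp add: zielke_const_last_row_def)
  then obtain s where s: "s = 1 \<or> s = -1"
    and step: "\<forall>i\<in>{I ! k..n}. \<forall>j\<in>{I ! k..n}. A (Suc k) i j =
       (if i = n then A k n j - A k n (I ! (k - 1)) * s / tau - A k n (I ! k - 1) else zielke n i j)"
    by (rule iterate_step[OF \<open>k \<in> {1..<nt}\<close>])
  have Ak_last_row: "A k n x = c" if "x \<in> {I ! (k - 1)..n}" for x
    using Ak that by (simp add: zielke_const_last_row_def)
  have "I ! (k - 1) + 2 \<le> I ! k" "I ! k \<le> n"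
    using block_gap[of k] I_le_n[of k] Suc by auto
  then have "I ! (k - 1) \<in> {I ! (k - 1)..n}" "I ! k - 1 \<in> {I ! (k - 1)..n}"
    "{I ! k..n} \<subseteq> {I ! (k - 1)..n}" by auto
  then have "A k n (I ! (k - 1)) = c" "A k n (I ! k - 1) = c" "A k n j = c" if "j \<in> {I ! k..n}" for j
    using Ak_last_row that by auto
  then have "\<forall>i\<in>{I ! k..n}. \<forall>j\<in>{I ! k..n}. A (Suc k) i j = zielke_const_last_row n (- c * s / tau) i j"
    using step by (simp add: zielke_const_last_row_def)
  moreover have "\<bar>- c * s / tau\<bar> = tau powr (1 - real (Suc k))"
    unfolding powr_one_minus_Suc[OF tau_pos] using s c tau_pos by (auto simp: abs_mult)
  ultimately show ?case by (intro exI[of _ "- c * s / tau"]) simp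
qed

lemma maxnorm_iterate:
  assumes k: "k \<in> {1..nt}"
  shows "maxnorm_on {I ! (k - 1)..n} (A k) = tau powr (1 - real k)"
proof (cases "k = 1")
  case True
  have "maxnorm_on {1..n} (A 1) = maxnorm_on {1..n} (zielke n)"
    using run by (intro maxnorm_on_cong) (simp add: beam_run_def)
  then show ?thesis using True I_first maxnorm_zielke[OF n_ge_2] tau_pos by simp
next
  case False
  then obtain c where c: "\<bar>c\<bar> = tau powr (1 - real k)"
    and Ak: "\<forall>i\<in>{I ! (k - 1)..n}. \<forall>j\<in>{I ! (k - 1)..n}. A k i j = zielke_const_last_row n c i j"
    using iterate_const_last_row[of k] k by auto
  have "1 \<le> \<bar>c\<bar>"
    using c k tau_pos tau_le powr_mono'[of "1 - real k" 0 tau] by simp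
  moreover have "I ! (k - 1) \<le> n"
    using block_gap[OF k] I_less[of k nt] I_last k by (cases "k = nt") auto
  ultimately show ?thesis
    using c maxnorm_on_cong[OF Ak] maxnorm_zielke_const_last_row by simp
qed

end

theorem theorem3p3:
  fixes n :: nat and I :: "nat list" and tau :: real
    and A U Sg V :: "nat \<Rightarrow> nat \<Rightarrow> nat \<Rightarrow> real"
  assumes "n \<ge> 2"
    and "length I \<ge> 2"
    and "sorted_wrt (<) I"
    and "hd I = 1" and "last I = n + 1"
    and "\<forall>k\<in>{1..length I - 1}. I ! k - I ! (k - 1) \<ge> 2"
    and "0 < tau" and "tau \<le> 1 / 2"
    and "beam_run n I tau A U Sg V"
  shows "Max {maxnorm_on {I ! (k - 1)..n} (A k) / maxnorm_on {1..n} (zielke n) | k. k \<in> {1..length I - 1}}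
           = tau powr (1 - real (length I - 1))"
proof -
  interpret beam_on_zielke n I tau A U Sg V
    using assms by unfold_locales
  have ratios: "{maxnorm_on {I ! (k - 1)..n} (A k) / maxnorm_on {1..n} (zielke n) | k. k \<in> {1..nt}}
      = (\<lambda>k. tau powr (1 - real k)) ` {1..nt}"
    using maxnorm_iterate maxnorm_zielke[OF n_ge_2] by force
  have "mono (\<lambda>k :: nat. tau powr (1 - real k))"
    using tau_pos tau_le by (intro monoI powr_mono') auto
  moreover have "Max {1..nt} = nt"
    using length_I by (intro Max_eqI) auto
  ultimately have "Max ((\<lambda>k. tau powr (1 - real k)) ` {1..nt}) = tau powr (1 - real nt)"
    using length_I by (simp add: mono_Max_commute[symmetric])
  then show ?thesis unfolding ratios .
qed

end
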